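(* If a path $\omega\in\Omega$ is wCH-random for a computable temporal forecasting system $\varphi$, then $\min I_\textnormal{wCH}(\omega)\le\liminf_{n\to\infty}\overline{\varphi}(\omega_{1:n})$ and $\limsup_{n\to\infty}\underline{\varphi}(\omega_{1:n})\le\max I_\textnormal{wCH}(\omega)$.
   Context: $\mathcal{X}=\{0,1\}$; $\Omega=\mathcal{X}^{\mathbb{N}}$ (paths); $\mathbb{S}=\bigcup_{n\ge0}\mathcal X^n$ (situations), $|s|$ length, $\omega_{1:n}=(\omega_1,\dots,\omega_n)$, $\omega_{1:0}$ the empty string. $\mathcal{I}$: nonempty closed intervals $I\subseteq[0,1]$. A forecasting system is $\varphi:\mathbb S\to\mathcal I$, $\underline\varphi=\min\varphi$, $\overline\varphi=\max\varphi$; temporal if $\varphi(s)=\varphi(t)$ whenever $|s|=|t|$; an interval forecast $I$ is identified with the constant forecasting system $s\mapsto I$. $\varphi$ is computable if there are recursive $\underline q,\overline q:\mathbb S\times\mathbb N_0\to\mathbb Q$ with $|\underline\varphi(s)-\underline q(s,n)|<2^{-n}$ and $|\overline\varphi(s)-\overline q(s,n)|<2^{-n}$. A path $\omega$ is wCH-random for $\varphi$ if for every recursive temporal selection process $S:\mathbb S\to\{0,1\}$ (i.e. $S(s)$ depends only on $|s|$) with $\sum_{k=0}^{n-1}S(\omega_{1:k})\to\infty$: $\liminf_n \frac{\sum_{k<n}S(\omega_{1:k})[\omega_{k+1}-\underline\varphi(\omega_{1:k})]}{\sum_{k<n}S(\omega_{1:k})}\ge0$ and $\limsup_n \frac{\sum_{k<n}S(\omega_{1:k})[\omega_{k+1}-\overline\varphi(\omega_{1:k})]}{\sum_{k<n}S(\omega_{1:k})}\le0$.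 $\mathcal I_\textnormal{wCH}(\omega)=\{I\in\mathcal I:\omega\text{ wCH-random for }I\}$, $I_\textnormal{wCH}(\omega)=\bigcap_{I\in\mathcal I_\textnormal{wCH}(\omega)}I$. *)

theory Defs
  imports Complex_Main "HOL-Library.Extended_Real"
begin

datatype recf = Zr | Sc | Proj nat | Cn recf "recf list" | Pr recf recf | Mn recf

inductive rec_eval :: "recf \<Rightarrow> nat list \<Rightarrow> nat \<Rightarrow> bool" where
  zero: "rec_eval Zr xs 0"
| succ: "rec_eval Sc (x # xs) (Suc x)"
| proj: "i < length xs \<Longrightarrow> rec_eval (Proj i) xs (xs ! i)"
| comp: "length ys = length gs \<Longrightarrow> (\<forall>i < length gs. rec_eval (gs ! i) xs (ys ! i))
          \<Longrightarrow> rec_eval f ys z \<Longrightarrow> rec_eval (Cn f gs) xs z"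
| pr0: "rec_eval f xs y \<Longrightarrow> rec_eval (Pr f g) (0 # xs) y"
| prS: "rec_eval (Pr f g) (n # xs) y \<Longrightarrow> rec_eval g (y # n # xs) z
          \<Longrightarrow> rec_eval (Pr f g) (Suc n # xs) z"
| mu: "rec_eval f (n # xs) 0 \<Longrightarrow> (\<forall>m < n. \<exists>y. y \<noteq> 0 \<and> rec_eval f (m # xs) y)
          \<Longrightarrow> rec_eval (Mn f) xs n"

definition recursive_fn :: "nat \<Rightarrow> (nat list \<Rightarrow> nat) \<Rightarrow> bool" where
  "recursive_fn k f \<longleftrightarrow> (\<exists>c. \<forall>xs. length xs = k \<longrightarrow> rec_eval c xs (f xs))"

text \<open>Situations are finite binary strings (True = 1, False = 0); a path is a map
  nat => bool where omega k is the outcome omega_(k+1).\<close>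

type_synonym sit = "bool list"
type_synonym path = "nat \<Rightarrow> bool"

definition prefix :: "path \<Rightarrow> nat \<Rightarrow> sit" where
  "prefix \<omega> n = map \<omega> [0..<n]"

text \<open>Bijective base-2 coding of situations as natural numbers.\<close>
fun enc_sit :: "sit \<Rightarrow> nat" where
  "enc_sit [] = 0"
| "enc_sit (b # s) = 2 * enc_sit s + (if b then 2 else 1)"

definition recursive_sel :: "(sit \<Rightarrow> bool) \<Rightarrow> bool" where
  "recursive_sel S \<longleftrightarrow> recursive_fn 1 (\<lambda>xs. SOME v. \<exists>s. xs = [enc_sit s] \<and> v = (if S s then 1 else 0))"

definition recursive_rat2 :: "(sit \<Rightarrow> nat \<Rightarrow> rat) \<Rightarrow> bool" where
  "recursive_rat2 q \<longleftrightarrow> (\<exists>a b c. recursive_fn 2 a \<and> recursive_fn 2 b \<and> recursive_fn 2 c \<and>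
     (\<forall>s n. q s n = (of_nat (a [enc_sit s, n]) - of_nat (b [enc_sit s, n]))
                     / (of_nat (c [enc_sit s, n]) + 1)))"

text \<open>An interval forecast is a pair (lo, hi) standing for [lo, hi] subset of [0,1].\<close>
definition valid_interval :: "real \<times> real \<Rightarrow> bool" where
  "valid_interval I \<longleftrightarrow> 0 \<le> fst I \<and> fst I \<le> snd I \<and> snd I \<le> 1"

definition forecasting_system :: "(sit \<Rightarrow> real \<times> real) \<Rightarrow> bool" where
  "forecasting_system \<phi> \<longleftrightarrow> (\<forall>s. valid_interval (\<phi> s))"

definition temporal :: "(sit \<Rightarrow> 'a) \<Rightarrow> bool" where
  "temporal \<phi> \<longleftrightarrow> (\<forall>s t. length s = length t \<longrightarrow> \<phi> s = \<phi> t)"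

definition computable_fs :: "(sit \<Rightarrow> real \<times> real) \<Rightarrow> bool" where
  "computable_fs \<phi> \<longleftrightarrow> (\<exists>ql qh. recursive_rat2 ql \<and> recursive_rat2 qh \<and>
     (\<forall>s n. \<bar>fst (\<phi> s) - real_of_rat (ql s n)\<bar> < 2 powr (- real n) \<and>
            \<bar>snd (\<phi> s) - real_of_rat (qh s n)\<bar> < 2 powr (- real n)))"

definition sel_count :: "(sit \<Rightarrow> bool) \<Rightarrow> path \<Rightarrow> nat \<Rightarrow> real" where
  "sel_count S \<omega> n = (\<Sum>k<n. of_bool (S (prefix \<omega> k)))"

definition wCH_random :: "(sit \<Rightarrow> real \<times> real) \<Rightarrow> path \<Rightarrow> bool" where
  "wCH_random \<phi> \<omega> \<longleftrightarrow> (\<forall>S. recursive_sel S \<and> temporal S \<and>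
      filterlim (sel_count S \<omega>) at_top sequentially \<longrightarrow>
      liminf (\<lambda>n. ereal ((\<Sum>k<n. of_bool (S (prefix \<omega> k)) *
                   (of_bool (\<omega> k) - fst (\<phi> (prefix \<omega> k)))) / sel_count S \<omega> n)) \<ge> 0 \<and>
      limsup (\<lambda>n. ereal ((\<Sum>k<n. of_bool (S (prefix \<omega> k)) *
                   (of_bool (\<omega> k) - snd (\<phi> (prefix \<omega> k)))) / sel_count S \<omega> n)) \<le> 0)"

definition I_wCH_family :: "path \<Rightarrow> (real \<times> real) set" where
  "I_wCH_family \<omega> = {I. valid_interval I \<and> wCH_random (\<lambda>_. I) \<omega>}"

definition I_wCH :: "path \<Rightarrow> real set" where
  "I_wCH \<omega> = (\<Inter>I \<in> I_wCH_family \<omega>. {fst I..snd I})"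

end

theory Submission
  imports Defs
begin

(* Suppose fst I > liminf of the upper forecasts for some wCH-random interval I. Pick a rational m
   strictly in between and select the rounds in which a rational approximation of the upper
   forecast, taken to precision 2^-N, lies below m. Evaluating the approximation at the
   situation 0^n instead of the actual one keeps the selection temporal without changing the
   forecast, since phi is temporal; the selection is recursive because phi is computable, and it
   selects infinitely often. On the selected rounds the upper forecast stays below fst I by a
   fixed margin, yet randomness for phi bounds the selected average of omega from above by
   the upper forecasts while randomness for I bounds it from below by fst I. The lower
   forecasts are handled symmetrically. Selecting every round instead shows fst I <= snd J for
   any two wCH-random intervals, so I_wCH is the nonempty interval [sup fst I, inf snd J]. *)

section \<open>Recursive functions\<close>

lemma rec_eval_ProjI: "i < length xs \<Longrightarrow> xs ! i = v \<Longrightarrow> rec_eval (Proj i) xs v"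
  using rec_eval.proj by blast

lemma rec_eval_ScI: "rec_eval Sc [x] (Suc x)"
  by (rule rec_eval.succ)

lemma rec_eval_Cn1: "rec_eval g xs y \<Longrightarrow> rec_eval f [y] z \<Longrightarrow> rec_eval (Cn f [g]) xs z"
  by (rule rec_eval.comp[of "[y]"]) auto

lemma rec_eval_Cn2:
  "rec_eval g xs y \<Longrightarrow> rec_eval h xs y' \<Longrightarrow> rec_eval f [y, y'] z
    \<Longrightarrow> rec_eval (Cn f [g, h]) xs z"
  by (rule rec_eval.comp[of "[y, y']"]) (auto simp: less_Suc_eq nth_Cons')

fun const_r :: "nat \<Rightarrow> recf" where
  "const_r 0 = Zr"
| "const_r (Suc k) = Cn Sc [const_r k]"

lemma rec_eval_const_r: "rec_eval (const_r k) xs k"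
  by (induction k) (auto intro: rec_eval.zero rec_eval_Cn1 rec_eval_ScI)

definition add_r :: recf where
  "add_r = Pr (Proj 0) (Cn Sc [Proj 0])"

lemma rec_eval_add_r: "rec_eval add_r (n # y # xs) (n + y)"
  unfolding add_r_def
  by (induction n) (auto intro!: rec_eval.pr0 rec_eval.prS rec_eval_Cn1 rec_eval_ProjI rec_eval_ScI)

definition mult_r :: recf where
  "mult_r = Pr Zr (Cn add_r [Proj 2, Proj 0])"

lemma rec_eval_mult_r: "rec_eval mult_r (n # y # xs) (n * y)"
  unfolding mult_r_def
  by (induction n) (auto intro!: rec_eval.pr0 rec_eval.prS rec_eval.zero rec_eval_Cn2 rec_eval_ProjI
      rec_eval_add_r[of _ _ "[]", simplified])

definition pred_r :: recf where
  "pred_r = Pr Zr (Proj 1)"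

lemma rec_eval_pred_r: "rec_eval pred_r (n # xs) (n - 1)"
  unfolding pred_r_def
  by (induction n) (auto intro!: rec_eval.pr0 rec_eval.prS rec_eval.zero rec_eval_ProjI)

definition monus_r :: recf where
  "monus_r = Pr (Proj 0) (Cn pred_r [Proj 0])"

lemma rec_eval_monus_r: "rec_eval monus_r (n # x # xs) (x - n)"
  unfolding monus_r_def
proof (induction n)
  case (Suc n)
  have "rec_eval (Cn pred_r [Proj 0]) ((x - n) # n # x # xs) (x - n - 1)"
    by (rule rec_eval_Cn1[OF rec_eval_ProjI rec_eval_pred_r]) auto
  with Suc.IH have "rec_eval (Pr (Proj 0) (Cn pred_r [Proj 0])) (Suc n # x # xs) (x - n - 1)"
    by (rule rec_eval.prS)
  then show ?case by simp
qed (simp add: rec_eval.pr0 rec_eval_ProjI)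

definition less_r :: recf where
  "less_r = Cn monus_r [Cn monus_r [monus_r, const_r 1], const_r 1]"

lemma rec_eval_less_r: "rec_eval less_r (u # v # xs) (of_bool (u < v))"
proof -
  have "rec_eval less_r (u # v # xs) (1 - (1 - (v - u)))"
    unfolding less_r_def
    by (intro rec_eval_Cn2[where y="1 - (v - u)" and y'=1]
        rec_eval_Cn2[where y="v - u" and y'=1] rec_eval_monus_r rec_eval_const_r
        rec_eval_monus_r[of _ _ "[]"])
  moreover have "1 - (1 - (v - u)) = of_bool (u < v)" by simp
  ultimately show ?thesis by simp
qed

definition pow2_r :: recf where
  "pow2_r = Pr (const_r 1) (Cn mult_r [Proj 0, const_r 2])"

lemma rec_eval_pow2_r: "rec_eval pow2_r (n # xs) (2 ^ n)"
  unfolding pow2_r_def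
proof (induction n)
  case (Suc n)
  have "rec_eval (Cn mult_r [Proj 0, const_r 2]) (2 ^ n # n # xs) (2 ^ n * 2)"
    by (rule rec_eval_Cn2[OF rec_eval_ProjI rec_eval_const_r rec_eval_mult_r]) auto
  with Suc.IH
  have "rec_eval (Pr (const_r 1) (Cn mult_r [Proj 0, const_r 2])) (Suc n # xs) (2 ^ n * 2)"
    by (rule rec_eval.prS)
  then show ?case by (simp add: mult.commute)
qed (use rec_eval.pr0 rec_eval_const_r[of 1] in simp)

lemma recursive_fn_const: "recursive_fn k (\<lambda>_. n)"
  unfolding recursive_fn_def using rec_eval_const_r by blast

lemma recursive_fn_binop:
  assumes "\<And>x y. rec_eval h [x, y] (g x y)" and "recursive_fn k f1" and "recursive_fn k f2"
  shows "recursive_fn k (\<lambda>xs. g (f1 xs) (f2 xs))"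
proof -
  obtain c1 where c1: "\<And>xs. length xs = k \<Longrightarrow> rec_eval c1 xs (f1 xs)"
    using assms(2) unfolding recursive_fn_def by blast
  obtain c2 where c2: "\<And>xs. length xs = k \<Longrightarrow> rec_eval c2 xs (f2 xs)"
    using assms(3) unfolding recursive_fn_def by blast
  show ?thesis
    unfolding recursive_fn_def using rec_eval_Cn2[OF c1 c2 assms(1)] by blast
qed

lemma recursive_fn_add:
  "recursive_fn k f1 \<Longrightarrow> recursive_fn k f2 \<Longrightarrow> recursive_fn k (\<lambda>xs. f1 xs + f2 xs)"
  by (rule recursive_fn_binop[OF rec_eval_add_r])

lemma recursive_fn_mult:
  "recursive_fn k f1 \<Longrightarrow> recursive_fn k f2 \<Longrightarrow> recursive_fn k (\<lambda>xs. f1 xs * f2 xs)"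
  by (rule recursive_fn_binop[OF rec_eval_mult_r])

section \<open>Computable temporal selections\<close>

lemma enc_sit_bounds: "2 ^ length s \<le> Suc (enc_sit s) \<and> Suc (enc_sit s) < 2 ^ Suc (length s)"
  by (induction s) auto

lemma enc_sit_replicate_False: "enc_sit (replicate k False) = 2 ^ k - 1"
proof (induction k)
  case (Suc k)
  have "(1::nat) \<le> 2 ^ k" by simp
  then have "Suc (2 * (2 ^ k - 1)) = 2 * 2 ^ k - (1::nat)" by linarith
  then show ?case using Suc by simp
qed simp

fun dec_sit :: "nat \<Rightarrow> sit" where
  "dec_sit 0 = []"
| "dec_sit (Suc n) = odd n # dec_sit (n div 2)"

lemma enc_sit_dec_sit: "enc_sit (dec_sit n) = n"
  by (induction n rule: dec_sit.induct) auto

definition length_test_r :: recf where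
  "length_test_r = Cn monus_r [Cn less_r [Cn Sc [Proj 1], Cn pow2_r [Cn Sc [Proj 0]]], const_r 1]"

lemma rec_eval_length_test_r:
  "rec_eval length_test_r (k # x # xs) (of_bool (2 ^ Suc k \<le> Suc x))"
proof -
  have succ_x: "rec_eval (Cn Sc [Proj 1]) (k # x # xs) (Suc x)"
    by (rule rec_eval_Cn1[OF rec_eval_ProjI rec_eval_ScI]) auto
  have pow2_k: "rec_eval (Cn pow2_r [Cn Sc [Proj 0]]) (k # x # xs) (2 ^ Suc k)"
    by (rule rec_eval_Cn1[OF rec_eval_Cn1[OF rec_eval_ProjI rec_eval_ScI] rec_eval_pow2_r]) auto
  have "rec_eval length_test_r (k # x # xs) (1 - of_bool (Suc x < 2 ^ Suc k))"
    unfolding length_test_r_def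
    by (rule rec_eval_Cn2[OF rec_eval_Cn2[OF succ_x pow2_k rec_eval_less_r] rec_eval_const_r
          rec_eval_monus_r])
  moreover have "1 - of_bool (Suc x < 2 ^ Suc k) = (of_bool (2 ^ Suc k \<le> Suc x) :: nat)"
    by simp
  ultimately show ?thesis by simp
qed

text \<open>The length of \<open>s\<close> is the least \<open>k\<close> with \<open>enc_sit s + 1 < 2 ^ (k + 1)\<close>.\<close>

definition length_r :: recf where
  "length_r = Mn length_test_r"

lemma rec_eval_length_r: "rec_eval length_r [enc_sit s] (length s)"
  unfolding length_r_def
proof (rule rec_eval.mu)
  have "\<not> 2 ^ Suc (length s) \<le> Suc (enc_sit s)"
    using enc_sit_bounds[of s] by linarith
  then show "rec_eval length_test_r [length s, enc_sit s] 0"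
    using rec_eval_length_test_r[of "length s" "enc_sit s" "[]"] by simp
  show "\<forall>m<length s. \<exists>y. y \<noteq> 0 \<and> rec_eval length_test_r [m, enc_sit s] y"
  proof (intro allI impI)
    fix m assume "m < length s"
    then have "(2::nat) ^ Suc m \<le> 2 ^ length s" by (intro power_increasing) auto
    then have "2 ^ Suc m \<le> Suc (enc_sit s)" using enc_sit_bounds[of s] by linarith
    then show "\<exists>y. y \<noteq> 0 \<and> rec_eval length_test_r [m, enc_sit s] y"
      using rec_eval_length_test_r[of m "enc_sit s" "[]"] by auto
  qed
qed

definition canon_r :: recf where
  "canon_r = Cn pred_r [Cn pow2_r [length_r]]"

lemma rec_eval_canon_r: "rec_eval canon_r [enc_sit s] (enc_sit (replicate (length s) False))"
  unfolding canon_r_def enc_sit_replicate_False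
  by (intro rec_eval_Cn1[where y="2 ^ length s"] rec_eval_Cn1[where y="length s"]
      rec_eval_length_r rec_eval_pow2_r rec_eval_pred_r)

lemma recursive_selI:
  assumes "\<And>s. rec_eval c [enc_sit s] (of_bool (S s))"
  shows "recursive_sel S"
  unfolding recursive_sel_def recursive_fn_def
proof (intro exI allI impI)
  fix xs :: "nat list"
  assume "length xs = 1"
  then obtain x where "xs = [x]"
    by (cases xs) auto
  then have "xs = [enc_sit (dec_sit x)]"
    by (simp add: enc_sit_dec_sit)
  then have "\<exists>v s. xs = [enc_sit s] \<and> v = (if S s then 1 else 0 :: nat)"
    by blast
  \<comment> \<open>No injectivity of \<open>enc_sit\<close> needed: \<open>c\<close> is right for any preimage the choice picks.\<close>
  from someI_ex[OF this] obtain s where xs: "xs = [enc_sit s]" and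
    choice: "(SOME v. \<exists>s. xs = [enc_sit s] \<and> v = (if S s then 1 else 0)) =
      (if S s then 1 else 0 :: nat)"
    by blast
  show "rec_eval c xs (SOME v. \<exists>s. xs = [enc_sit s] \<and> v = (if S s then 1 else 0))"
    using assms[of s] by (subst choice) (simp add: xs of_bool_def)
qed

lemma recursive_sel_less_at_length:
  assumes "recursive_fn 2 f" and "recursive_fn 2 g"
  shows "recursive_sel (\<lambda>s. f [enc_sit (replicate (length s) False), N]
                             < g [enc_sit (replicate (length s) False), N])"
proof -
  obtain cf where cf: "\<And>xs. length xs = 2 \<Longrightarrow> rec_eval cf xs (f xs)"
    using assms(1) unfolding recursive_fn_def by blast
  obtain cg where cg: "\<And>xs. length xs = 2 \<Longrightarrow> rec_eval cg xs (g xs)"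
    using assms(2) unfolding recursive_fn_def by blast
  have F: "rec_eval (Cn cf [canon_r, const_r N]) [enc_sit s]
      (f [enc_sit (replicate (length s) False), N])"
    and G: "rec_eval (Cn cg [canon_r, const_r N]) [enc_sit s]
      (g [enc_sit (replicate (length s) False), N])"
    for s
    by (rule rec_eval_Cn2[OF rec_eval_canon_r rec_eval_const_r cf], simp)
      (rule rec_eval_Cn2[OF rec_eval_canon_r rec_eval_const_r cg], simp)
  show ?thesis
    by (rule recursive_selI[OF rec_eval_Cn2[OF F G rec_eval_less_r]])
qed

lemma recursive_sel_True: "recursive_sel (\<lambda>_. True)"
  by (rule recursive_selI[where c="const_r 1"]) (use rec_eval_const_r[of 1] in simp)

lemma frac_less_iff_nat:
  assumes "0 < d"
  shows "(real A - real B) / (real C + 1) < real p / real d \<longleftrightarrow> A * d < p * (C + 1) + B * d"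
proof -
  have "(real A - real B) / (real C + 1) < real p / real d \<longleftrightarrow>
      (real A - real B) * real d < real p * (real C + 1)"
    using assms by (simp add: divide_simps add_pos_nonneg)
  also have "\<dots> \<longleftrightarrow> real (A * d) < real (p * (C + 1) + B * d)"
    by (simp add: algebra_simps)
  finally show ?thesis by (simp only: of_nat_less_iff)
qed

lemma frac_greater_iff_nat:
  assumes "0 < d"
  shows "real p / real d < (real A - real B) / (real C + 1) \<longleftrightarrow> p * (C + 1) + B * d < A * d"
proof -
  have "real p / real d < (real A - real B) / (real C + 1) \<longleftrightarrow>
      real p * (real C + 1) < (real A - real B) * real d"
    using assms by (simp add: divide_simps add_pos_nonneg)
  also have "\<dots> \<longleftrightarrow> real (p * (C + 1) + B * d) < real (A * d)"
    by (simp add: algebra_simps)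
  finally show ?thesis by (simp only: of_nat_less_iff)
qed

lemma nonneg_Rats_nat_fractionE:
  assumes "t \<in> \<rat>" and "0 \<le> t"
  obtains p d :: nat where "0 < d" and "t = real p / real d"
proof -
  obtain p d :: nat where "d \<noteq> 0" "\<bar>t\<bar> = real p / real d"
    using Rats_abs_nat_div_natE[OF assms(1)] by metis
  with assms(2) that show ?thesis by simp
qed

lemma recursive_sel_threshold:
  assumes "recursive_rat2 q" and "t \<in> \<rat>" and "0 \<le> t"
  shows "recursive_sel (\<lambda>s. real_of_rat (q (replicate (length s) False) N) < t)"
    and "recursive_sel (\<lambda>s. t < real_of_rat (q (replicate (length s) False) N))"
proof -
  obtain p d :: nat where d: "0 < d" and t: "t = real p / real d"
    using nonneg_Rats_nat_fractionE[OF assms(2,3)] .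
  obtain a b c where abc: "recursive_fn 2 a" "recursive_fn 2 b" "recursive_fn 2 c" and
    q: "\<And>s n. q s n = (of_nat (a [enc_sit s, n]) - of_nat (b [enc_sit s, n]))
                        / (of_nat (c [enc_sit s, n]) + 1)"
    using assms(1) unfolding recursive_rat2_def by blast
  have q_real: "real_of_rat (q s n) =
      (real (a [enc_sit s, n]) - real (b [enc_sit s, n])) / (real (c [enc_sit s, n]) + 1)" for s n
    by (simp add: q of_rat_divide of_rat_diff of_rat_add)
  have X: "recursive_fn 2 (\<lambda>xs. a xs * d)"
    by (intro recursive_fn_mult recursive_fn_const abc)
  have Y: "recursive_fn 2 (\<lambda>xs. p * (c xs + 1) + b xs * d)"
    by (intro recursive_fn_add recursive_fn_mult recursive_fn_const abc)
  show "recursive_sel (\<lambda>s. real_of_rat (q (replicate (length s) False) N) < t)"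
    using recursive_sel_less_at_length[OF X Y, of N]
    by (simp add: q_real t frac_less_iff_nat[OF d])
  show "recursive_sel (\<lambda>s. t < real_of_rat (q (replicate (length s) False) N))"
    using recursive_sel_less_at_length[OF Y X, of N]
    by (simp add: q_real t frac_greater_iff_nat[OF d])
qed

section \<open>Averages along a selection\<close>

lemma filterlim_sum_of_bool_at_top:
  assumes "\<exists>\<^sub>F k in sequentially. P k"
  shows "filterlim (\<lambda>n. \<Sum>k<n. of_bool (P k) :: real) at_top sequentially"
proof -
  let ?count = "\<lambda>n. \<Sum>k<n. of_bool (P k) :: real"
  have mono: "?count n \<le> ?count n'" if "n \<le> n'" for n n'
    by (rule sum_mono2) (use that in auto)
  have unbounded: "\<exists>n. real M \<le> ?count n" for M
  proof (induction M)
    case 0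
    show ?case by (auto intro: sum_nonneg)
  next
    case (Suc M)
    then obtain n where n: "real M \<le> ?count n" by blast
    obtain n' where "n \<le> n'" and "P n'"
      using assms by (auto simp: frequently_sequentially)
    then have "real (Suc M) \<le> ?count (Suc n')"
      using n mono[of n n'] by simp
    then show ?case by blast
  qed
  show ?thesis
    unfolding filterlim_at_top eventually_sequentially
  proof
    fix Z :: real
    obtain M :: nat where "Z \<le> real M" using real_arch_simple by blast
    moreover obtain n where "real M \<le> ?count n" using unbounded by blast
    ultimately show "\<exists>N. \<forall>n'\<ge>N. Z \<le> ?count n'"
      using mono by (meson order_trans)
  qed
qed

definition sel_avg :: "(nat \<Rightarrow> bool) \<Rightarrow> (nat \<Rightarrow> real) \<Rightarrow> nat \<Rightarrow> real" where
  "sel_avg sel x n = (\<Sum>k<n. of_bool (sel k) * x k) / (\<Sum>k<n. of_bool (sel k))"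

lemma sel_avg_diff: "sel_avg sel x n - sel_avg sel y n = sel_avg sel (\<lambda>k. x k - y k) n"
  by (simp add: sel_avg_def diff_divide_distrib sum_subtractf right_diff_distrib)

lemma sel_avg_lower_bound:
  assumes "0 < (\<Sum>k<n. of_bool (sel k) :: real)" and "\<And>k. sel k \<Longrightarrow> c \<le> x k"
  shows "c \<le> sel_avg sel x n"
proof -
  have "c * (\<Sum>k<n. of_bool (sel k)) = (\<Sum>k<n. of_bool (sel k) * c)"
    by (simp add: sum_distrib_left mult.commute)
  also have "\<dots> \<le> (\<Sum>k<n. of_bool (sel k) * x k)"
    by (rule sum_mono) (use assms(2) in auto)
  finally show ?thesis
    using assms(1) by (simp add: sel_avg_def pos_le_divide_eq)
qed

lemma sel_avg_gap:
  assumes freq: "\<exists>\<^sub>F k in sequentially. sel k"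
    and lo: "liminf (\<lambda>n. ereal (sel_avg sel (\<lambda>k. w k - lo k) n)) \<ge> 0"
    and hi: "limsup (\<lambda>n. ereal (sel_avg sel (\<lambda>k. w k - hi k) n)) \<le> 0"
    and gap: "\<And>k. sel k \<Longrightarrow> \<delta> \<le> lo k - hi k"
  shows "\<delta> \<le> 0"
proof (rule ccontr)
  assume "\<not> \<delta> \<le> 0"
  then have "ereal (- (\<delta> / 2)) < 0" and "0 < ereal (\<delta> / 2)" by auto
  then have "\<forall>\<^sub>F n in sequentially. ereal (- (\<delta> / 2)) < ereal (sel_avg sel (\<lambda>k. w k - lo k) n)"
    and "\<forall>\<^sub>F n in sequentially. ereal (sel_avg sel (\<lambda>k. w k - hi k) n) < ereal (\<delta> / 2)"
    using lo hi unfolding le_Liminf_iff Limsup_le_iff by blast+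
  then have "\<forall>\<^sub>F n in sequentially. - (\<delta> / 2) < sel_avg sel (\<lambda>k. w k - lo k) n"
    and "\<forall>\<^sub>F n in sequentially. sel_avg sel (\<lambda>k. w k - hi k) n < \<delta> / 2"
    by simp_all
  moreover have "\<forall>\<^sub>F n in sequentially. 0 < (\<Sum>k<n. of_bool (sel k) :: real)"
    using filterlim_sum_of_bool_at_top[OF freq] unfolding filterlim_at_top_dense by blast
  ultimately have "\<forall>\<^sub>F n in sequentially. False"
  proof eventually_elim
    case (elim n)
    have "\<delta> \<le> sel_avg sel (\<lambda>k. lo k - hi k) n"
      using elim(3) gap by (rule sel_avg_lower_bound)
    also have "\<dots> = sel_avg sel (\<lambda>k. w k - hi k) n - sel_avg sel (\<lambda>k. w k - lo k) n"
      by (simp add: sel_avg_diff)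
    finally show False using elim(1,2) by linarith
  qed
  then show False by simp
qed

lemma wCH_randomD:
  assumes "wCH_random \<phi> \<omega>" and "recursive_sel S" and "temporal S"
    and "\<exists>\<^sub>F k in sequentially. S (prefix \<omega> k)"
  shows "liminf (\<lambda>n. ereal (sel_avg (\<lambda>k. S (prefix \<omega> k))
            (\<lambda>k. of_bool (\<omega> k) - fst (\<phi> (prefix \<omega> k))) n)) \<ge> 0"
    and "limsup (\<lambda>n. ereal (sel_avg (\<lambda>k. S (prefix \<omega> k))
            (\<lambda>k. of_bool (\<omega> k) - snd (\<phi> (prefix \<omega> k))) n)) \<le> 0"
  using assms filterlim_sum_of_bool_at_top[OF assms(4)]
  unfolding wCH_random_def sel_avg_def sel_count_def by blast+

section \<open>The wCH interval of a path\<close>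

lemma INT_atLeastAtMost_eq:
  fixes lo hi :: "'i \<Rightarrow> 'a::conditionally_complete_lattice"
  assumes "F \<noteq> {}" and "bdd_above (lo ` F)" and "bdd_below (hi ` F)"
  shows "(\<Inter>i\<in>F. {lo i..hi i}) = {Sup (lo ` F)..Inf (hi ` F)}"
proof -
  have "Sup (lo ` F) \<le> x \<and> x \<le> Inf (hi ` F) \<longleftrightarrow> (\<forall>i\<in>F. lo i \<le> x \<and> x \<le> hi i)" for x
    using assms by (simp add: cSup_le_iff le_cInf_iff ball_conj_distrib)
  then show ?thesis by auto
qed

lemma I_wCH_family_valid: "I \<in> I_wCH_family \<omega> \<Longrightarrow> 0 \<le> fst I \<and> fst I \<le> snd I \<and> snd I \<le> 1"
  by (simp add: I_wCH_family_def valid_interval_def)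

lemma wCH_random_I_wCH_family: "I \<in> I_wCH_family \<omega> \<Longrightarrow> wCH_random (\<lambda>_. I) \<omega>"
  by (simp add: I_wCH_family_def)

lemma unit_interval_in_I_wCH_family: "(0, 1) \<in> I_wCH_family \<omega>"
  unfolding I_wCH_family_def
proof (intro CollectI conjI)
  show "valid_interval (0, 1)"
    by (simp add: valid_interval_def)
  show "wCH_random (\<lambda>_. (0, 1)) \<omega>"
    unfolding wCH_random_def
  proof (intro allI impI conjI)
    fix S :: "sit \<Rightarrow> bool"
    show "0 \<le> liminf (\<lambda>n. ereal ((\<Sum>k<n. of_bool (S (prefix \<omega> k)) *
        (of_bool (\<omega> k) - fst ((\<lambda>_. (0::real, 1::real)) (prefix \<omega> k)))) / sel_count S \<omega> n))"
      by (rule Liminf_bounded, rule always_eventually)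
        (auto simp: sel_count_def intro!: divide_nonneg_nonneg sum_nonneg)
    show "limsup (\<lambda>n. ereal ((\<Sum>k<n. of_bool (S (prefix \<omega> k)) *
        (of_bool (\<omega> k) - snd ((\<lambda>_. (0::real, 1::real)) (prefix \<omega> k)))) / sel_count S \<omega> n)) \<le> 0"
      by (rule Limsup_bounded, rule always_eventually)
        (auto simp: sel_count_def intro!: divide_nonpos_nonneg sum_nonpos sum_nonneg)
  qed
qed

lemma wCH_random_selected_upper_bound:
  assumes rd: "wCH_random \<phi> \<omega>" and I: "I \<in> I_wCH_family \<omega>"
    and S: "recursive_sel S" "temporal S" and freq: "\<exists>\<^sub>F k in sequentially. S (prefix \<omega> k)"
    and bound: "\<And>k. S (prefix \<omega> k) \<Longrightarrow> snd (\<phi> (prefix \<omega> k)) \<le> c"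
  shows "fst I \<le> c"
proof -
  have "fst I - c \<le> 0"
  proof (rule sel_avg_gap[where w="\<lambda>k. of_bool (\<omega> k)" and lo="\<lambda>_. fst I"
        and hi="\<lambda>k. snd (\<phi> (prefix \<omega> k))", OF freq])
    show "liminf (\<lambda>n. ereal (sel_avg (\<lambda>k. S (prefix \<omega> k)) (\<lambda>k. of_bool (\<omega> k) - fst I) n)) \<ge> 0"
      using wCH_randomD(1)[OF wCH_random_I_wCH_family[OF I] S freq] by simp
    show "limsup (\<lambda>n. ereal (sel_avg (\<lambda>k. S (prefix \<omega> k))
        (\<lambda>k. of_bool (\<omega> k) - snd (\<phi> (prefix \<omega> k))) n)) \<le> 0"
      using wCH_randomD(2)[OF rd S freq] .
    show "fst I - c \<le> fst I - snd (\<phi> (prefix \<omega> k))" if "S (prefix \<omega> k)" for k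
      using bound[OF that] by simp
  qed
  then show ?thesis by simp
qed

lemma wCH_random_selected_lower_bound:
  assumes rd: "wCH_random \<phi> \<omega>" and J: "J \<in> I_wCH_family \<omega>"
    and S: "recursive_sel S" "temporal S" and freq: "\<exists>\<^sub>F k in sequentially. S (prefix \<omega> k)"
    and bound: "\<And>k. S (prefix \<omega> k) \<Longrightarrow> c \<le> fst (\<phi> (prefix \<omega> k))"
  shows "c \<le> snd J"
proof -
  have "c - snd J \<le> 0"
  proof (rule sel_avg_gap[where w="\<lambda>k. of_bool (\<omega> k)" and lo="\<lambda>k. fst (\<phi> (prefix \<omega> k))"
        and hi="\<lambda>_. snd J", OF freq])
    show "liminf (\<lambda>n. ereal (sel_avg (\<lambda>k. S (prefix \<omega> k))
        (\<lambda>k. of_bool (\<omega> k) - fst (\<phi> (prefix \<omega> k))) n)) \<ge> 0"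
      using wCH_randomD(1)[OF rd S freq] .
    show "limsup (\<lambda>n. ereal (sel_avg (\<lambda>k. S (prefix \<omega> k)) (\<lambda>k. of_bool (\<omega> k) - snd J) n)) \<le> 0"
      using wCH_randomD(2)[OF wCH_random_I_wCH_family[OF J] S freq] by simp
    show "c - snd J \<le> fst (\<phi> (prefix \<omega> k)) - snd J" if "S (prefix \<omega> k)" for k
      using bound[OF that] by simp
  qed
  then show ?thesis by simp
qed

lemma I_wCH_family_fst_le_snd:
  assumes I: "I \<in> I_wCH_family \<omega>" and J: "J \<in> I_wCH_family \<omega>"
  shows "fst I \<le> snd J"
proof (rule wCH_random_selected_upper_bound[OF wCH_random_I_wCH_family[OF J] I recursive_sel_True])
  show "temporal (\<lambda>_. True)"
    by (simp add: temporal_def)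
  show "\<exists>\<^sub>F k in sequentially. True"
    by (auto simp: frequently_sequentially)
qed simp

lemma I_wCH_family_bdd:
  shows "bdd_above (fst ` I_wCH_family \<omega>)" and "bdd_below (snd ` I_wCH_family \<omega>)"
  using I_wCH_family_valid by (fastforce intro: bdd_aboveI[of _ 1] bdd_belowI[of _ 0])+

lemma I_wCH_eq_atLeastAtMost:
  fixes \<omega> :: path
  defines "a \<equiv> Sup (fst ` I_wCH_family \<omega>)" and "b \<equiv> Inf (snd ` I_wCH_family \<omega>)"
  shows "I_wCH \<omega> = {a..b}" and "a \<le> b"
proof -
  have ne: "I_wCH_family \<omega> \<noteq> {}"
    using unit_interval_in_I_wCH_family by blast
  show "I_wCH \<omega> = {a..b}"
    unfolding I_wCH_def a_def b_def by (rule INT_atLeastAtMost_eq[OF ne I_wCH_family_bdd])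
  have "a \<le> snd J" if "J \<in> I_wCH_family \<omega>" for J
    unfolding a_def using ne I_wCH_family_fst_le_snd[OF _ that] by (auto intro: cSup_least)
  then show "a \<le> b"
    unfolding b_def using ne by (auto intro: cInf_greatest)
qed

section \<open>Forecasts against the wCH interval\<close>

lemma ereal_le_liminfI:
  assumes "\<And>t. t < a \<Longrightarrow> \<forall>\<^sub>F n in F. t < u n"
  shows "ereal a \<le> Liminf F (\<lambda>n. ereal (u n))"
  unfolding le_Liminf_iff
proof (intro allI impI)
  fix y assume "y < ereal a"
  then show "\<forall>\<^sub>F n in F. y < ereal (u n)"
    using assms by (cases y) (auto elim: eventually_mono)
qed

lemma limsup_le_erealI:
  assumes "\<And>t. b < t \<Longrightarrow> \<forall>\<^sub>F n in F. u n < t"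
  shows "Limsup F (\<lambda>n. ereal (u n)) \<le> ereal b"
  unfolding Limsup_le_iff
proof (intro allI impI)
  fix y assume "ereal b < y"
  then show "\<forall>\<^sub>F n in F. ereal (u n) < y"
    using assms by (cases y) (auto elim: eventually_mono)
qed

lemma ex_two_powr_less: "0 < \<epsilon> \<Longrightarrow> \<exists>N::nat. 2 powr - real N < \<epsilon>"
proof -
  assume "0 < \<epsilon>"
  then obtain N where "(1 / 2) ^ N < \<epsilon>"
    using real_arch_pow_inv[of \<epsilon> "1 / 2"] by auto
  then show ?thesis
    by (metis powr_minus_divide powr_realpow power_one_over zero_less_numeral)
qed

lemma length_prefix [simp]: "length (prefix \<omega> n) = n"
  by (simp add: prefix_def)

lemma temporal_prefix: "temporal \<phi> \<Longrightarrow> \<phi> (prefix \<omega> n) = \<phi> (replicate n False)"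
  by (simp add: temporal_def)

lemma computable_fs_prefix_approxE:
  assumes "temporal \<phi>" and "computable_fs \<phi>"
  obtains ql qh where "recursive_rat2 ql" and "recursive_rat2 qh"
    and "\<And>k N. \<bar>fst (\<phi> (prefix \<omega> k)) - real_of_rat (ql (replicate k False) N)\<bar>
                    < 2 powr - real N"
    and "\<And>k N. \<bar>snd (\<phi> (prefix \<omega> k)) - real_of_rat (qh (replicate k False) N)\<bar>
                    < 2 powr - real N"
  using assms(2) temporal_prefix[OF assms(1)] unfolding computable_fs_def by metis

lemma eventually_upper_forecast_above:
  assumes fs: "forecasting_system \<phi>" and tm: "temporal \<phi>" and cp: "computable_fs \<phi>"
    and rd: "wCH_random \<phi> \<omega>" and I: "I \<in> I_wCH_family \<omega>" and t: "t < fst I"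
  shows "\<forall>\<^sub>F n in sequentially. t < snd (\<phi> (prefix \<omega> n))"
proof (cases "t < 0")
  case True
  have "0 \<le> snd (\<phi> s)" for s
    using fs unfolding forecasting_system_def valid_interval_def by (metis order_trans)
  with True show ?thesis by (auto intro: always_eventually order.strict_trans2)
next
  case False
  obtain m where m: "m \<in> \<rat>" "t < m" "m < fst I"
    using Rats_dense_in_real[OF t] by blast
  obtain N :: nat where N: "2 powr - real N < min (m - t) (fst I - m)"
    using ex_two_powr_less[of "min (m - t) (fst I - m)"] m by auto
  obtain q where q: "recursive_rat2 q"
    and close: "\<And>k. \<bar>snd (\<phi> (prefix \<omega> k)) - real_of_rat (q (replicate k False) N)\<bar>
                          < 2 powr - real N"
    using computable_fs_prefix_approxE[OF tm cp] by metis
  define S :: "sit \<Rightarrow> bool" where "S s \<longleftrightarrow> real_of_rat (q (replicate (length s) False) N) < m" for s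
  have S_rec: "recursive_sel S"
    unfolding S_def using recursive_sel_threshold(1)[OF q m(1)] False m(2) by simp
  have S_temporal: "temporal S"
    by (simp add: S_def temporal_def)
  show ?thesis
  proof (rule ccontr)
    assume "\<not> ?thesis"
    then have "\<exists>\<^sub>F k in sequentially. snd (\<phi> (prefix \<omega> k)) \<le> t"
      by (simp add: not_eventually not_less)
    then have freq: "\<exists>\<^sub>F k in sequentially. S (prefix \<omega> k)"
    proof (rule frequently_elim1)
      show "S (prefix \<omega> k)" if "snd (\<phi> (prefix \<omega> k)) \<le> t" for k
        using that close[of k] N by (auto simp: S_def abs_less_iff)
    qed
    have "fst I \<le> m + 2 powr - real N"
    proof (rule wCH_random_selected_upper_bound[OF rd I S_rec S_temporal freq])
      show "snd (\<phi> (prefix \<omega> k)) \<le> m + 2 powr - real N" if "S (prefix \<omega> k)" for k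
        using that close[of k] by (auto simp: S_def abs_less_iff)
    qed
    with N show False by linarith
  qed
qed

lemma eventually_lower_forecast_below:
  assumes tm: "temporal \<phi>" and cp: "computable_fs \<phi>"
    and rd: "wCH_random \<phi> \<omega>" and J: "J \<in> I_wCH_family \<omega>" and t: "snd J < t"
  shows "\<forall>\<^sub>F n in sequentially. fst (\<phi> (prefix \<omega> n)) < t"
proof -
  obtain m where m: "m \<in> \<rat>" "snd J < m" "m < t"
    using Rats_dense_in_real[OF t] by blast
  have "0 \<le> m"
    using m(2) I_wCH_family_valid[OF J] by linarith
  obtain N :: nat where N: "2 powr - real N < min (t - m) (m - snd J)"
    using ex_two_powr_less[of "min (t - m) (m - snd J)"] m by auto
  obtain q where q: "recursive_rat2 q"
    and close: "\<And>k. \<bar>fst (\<phi> (prefix \<omega> k)) - real_of_rat (q (replicate k False) N)\<bar>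
                          < 2 powr - real N"
    using computable_fs_prefix_approxE[OF tm cp] by metis
  define S :: "sit \<Rightarrow> bool" where "S s \<longleftrightarrow> m < real_of_rat (q (replicate (length s) False) N)" for s
  have S_rec: "recursive_sel S"
    unfolding S_def using recursive_sel_threshold(2)[OF q m(1) \<open>0 \<le> m\<close>] .
  have S_temporal: "temporal S"
    by (simp add: S_def temporal_def)
  show ?thesis
  proof (rule ccontr)
    assume "\<not> ?thesis"
    then have "\<exists>\<^sub>F k in sequentially. t \<le> fst (\<phi> (prefix \<omega> k))"
      by (simp add: not_eventually not_less)
    then have freq: "\<exists>\<^sub>F k in sequentially. S (prefix \<omega> k)"
    proof (rule frequently_elim1)
      show "S (prefix \<omega> k)" if "t \<le> fst (\<phi> (prefix \<omega> k))" for k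
        using that close[of k] N by (auto simp: S_def abs_less_iff)
    qed
    have "m - 2 powr - real N \<le> snd J"
    proof (rule wCH_random_selected_lower_bound[OF rd J S_rec S_temporal freq])
      show "m - 2 powr - real N \<le> fst (\<phi> (prefix \<omega> k))" if "S (prefix \<omega> k)" for k
        using that close[of k] by (auto simp: S_def abs_less_iff)
    qed
    with N show False by linarith
  qed
qed

theorem proposition15:
  fixes \<phi> :: "bool list \<Rightarrow> real \<times> real" and \<omega> :: "nat \<Rightarrow> bool"
  assumes "forecasting_system \<phi>" and "temporal \<phi>" and "computable_fs \<phi>"
    and "wCH_random \<phi> \<omega>"
  shows "I_wCH \<omega> \<noteq> {} \<and>
    ereal (Inf (I_wCH \<omega>)) \<le> liminf (\<lambda>n. ereal (snd (\<phi> (prefix \<omega> n)))) \<and>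
    limsup (\<lambda>n. ereal (fst (\<phi> (prefix \<omega> n)))) \<le> ereal (Sup (I_wCH \<omega>))"
proof -
  let ?F = "I_wCH_family \<omega>"
  have ne: "?F \<noteq> {}"
    using unit_interval_in_I_wCH_family by blast
  have "ereal (Sup (fst ` ?F)) \<le> liminf (\<lambda>n. ereal (snd (\<phi> (prefix \<omega> n))))"
  proof (rule ereal_le_liminfI)
    fix t assume "t < Sup (fst ` ?F)"
    then obtain I where "I \<in> ?F" and "t < fst I"
      using less_cSup_iff[OF _ I_wCH_family_bdd(1)] ne by auto
    then show "\<forall>\<^sub>F n in sequentially. t < snd (\<phi> (prefix \<omega> n))"
      using eventually_upper_forecast_above assms by blast
  qed
  moreover have "limsup (\<lambda>n. ereal (fst (\<phi> (prefix \<omega> n)))) \<le> ereal (Inf (snd ` ?F))"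
  proof (rule limsup_le_erealI)
    fix t assume "Inf (snd ` ?F) < t"
    then obtain J where "J \<in> ?F" and "snd J < t"
      using cInf_less_iff[OF _ I_wCH_family_bdd(2)] ne by auto
    then show "\<forall>\<^sub>F n in sequentially. fst (\<phi> (prefix \<omega> n)) < t"
      using eventually_lower_forecast_below assms by blast
  qed
  ultimately show ?thesis
    using I_wCH_eq_atLeastAtMost[of \<omega>] by simp
qed

end
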